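(* For all integers $n\ge1$ the following hold in $\mathbb V$: $$\sum_{k=0}^n G_k\star\tilde G_{n-k}\,q^{n-2k}=q\sum_{k=0}^{n-1}W_{-k}\star W_{n-k}\,q^{n-1-2k}=[2]_q^{n-1}(xy+yx)^{n-1}(qxy+q^{-1}yx),$$ $$\sum_{k=0}^n G_k\star\tilde G_{n-k}\,q^{2k-n}=q\sum_{k=0}^{n-1}W_{n-k}\star W_{-k}\,q^{n-1-2k}=[2]_q^{n-1}(q^{-1}xy+qyx)(xy+yx)^{n-1},$$ $$\sum_{k=0}^n \tilde G_k\star G_{n-k}\,q^{n-2k}=q\sum_{k=0}^{n-1}W_{n-k}\star W_{-k}\,q^{2k+1-n}=[2]_q^{n-1}(xy+yx)^{n-1}(q^{-1}xy+qyx),$$ $$\sum_{k=0}^n \tilde G_k\star G_{n-k}\,q^{2k-n}=q\sum_{k=0}^{n-1}W_{-k}\star W_{n-k}\,q^{2k+1-n}=[2]_q^{n-1}(qxy+q^{-1}yx)(xy+yx)^{n-1}.$$ On the right-hand sides, products and powers are taken in the free (concatenation) product.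
   Context: Let $\mathbb F$ be a field and let $q\in\mathbb F$ be nonzero and not a root of unity. Let $[m]_q=(q^m-q^{-m})/(q-q^{-1})$. Let $\mathbb V$ be the free associative $\mathbb F$-algebra on noncommuting $x,y$, with basis the words (including $1$). Juxtaposition denotes concatenation. Set $\langle x,x\rangle=\langle y,y\rangle=2$ and $\langle x,y\rangle=\langle y,x\rangle=-2$. The $q$-shuffle product $\star$ is the bilinear product determined as follows: - $1\star v=v\star 1=v$; - for nontrivial words $u=u_1\cdots u_r$ and $v=v_1\cdots v_s$, $$u\star v=u_1((u_2\cdots u_r)\star v)+v_1(u\star(v_2\cdots v_s))q^{\langle u_1,v_1\rangle+\cdots+\langle u_r,v_1\rangle}.$$ This makes $\mathbb V$ an associative algebra, the $q$-shuffle algebra. For $k\in\mathbb N$: - $W_{-k}=xyx\cdots x$ is the alternating word of length $2k+1$ beginning and ending with $x$; - $W_{k+1}=yxy\cdots y$ is the alternating word of length $2k+1$ beginning and ending with $y$; - $G_k=yxyx\cdots yx$ is the word of length $2k$; - $\tilde G_k=xyxy\cdots xy$ is the word of length $2k$; - $G_0=\tilde G_0=1$. *)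

theory Defs
  imports Main
begin

datatype letter = X | Y

text \<open>Elements of the free algebra V are represented by their coefficient functions on words
  (all elements occurring below are finitely supported).\<close>
type_synonym 'a vec = "letter list \<Rightarrow> 'a"

definition wd :: "letter list \<Rightarrow> 'a::field vec" where
  "wd u = (\<lambda>w. if w = u then 1 else 0)"

definition vadd :: "'a::field vec \<Rightarrow> 'a vec \<Rightarrow> 'a vec" where
  "vadd f g = (\<lambda>w. f w + g w)"

definition vsmult :: "'a::field \<Rightarrow> 'a vec \<Rightarrow> 'a vec" where
  "vsmult c f = (\<lambda>w. c * f w)"

definition vzero :: "'a::field vec" where
  "vzero = (\<lambda>w. 0)"

definition vsum :: "nat \<Rightarrow> (nat \<Rightarrow> 'a::field vec) \<Rightarrow> 'a vec" where
  "vsum n F = (\<lambda>w. \<Sum>k\<le>n. F k w)"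

definition cat :: "'a::field vec \<Rightarrow> 'a vec \<Rightarrow> 'a vec" where
  "cat f g = (\<lambda>w. \<Sum>i\<le>length w. f (take i w) * g (drop i w))"

fun cpow :: "'a::field vec \<Rightarrow> nat \<Rightarrow> 'a vec" where
  "cpow f 0 = wd []"
| "cpow f (Suc n) = cat f (cpow f n)"

definition prep :: "letter \<Rightarrow> 'a::field vec \<Rightarrow> 'a vec" where
  "prep a f = (\<lambda>w. case w of [] \<Rightarrow> 0 | c # w' \<Rightarrow> if c = a then f w' else 0)"

definition pair :: "letter \<Rightarrow> letter \<Rightarrow> int" where
  "pair a b = (if a = b then 2 else -2)"

fun qshuf :: "'a::field \<Rightarrow> letter list \<Rightarrow> letter list \<Rightarrow> 'a vec" where
  "qshuf q [] v = wd v"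
| "qshuf q (a # u) [] = wd (a # u)"
| "qshuf q (a # u) (b # v) =
     vadd (prep a (qshuf q u (b # v)))
          (vsmult (q powi (\<Sum>c\<leftarrow>a # u. pair c b)) (prep b (qshuf q (a # u) v)))"

fun other :: "letter \<Rightarrow> letter" where
  "other X = Y" | "other Y = X"

fun alt :: "letter \<Rightarrow> nat \<Rightarrow> letter list" where
  "alt a 0 = []"
| "alt a (Suc m) = a # alt (other a) m"

definition Wneg :: "nat \<Rightarrow> letter list" where   \<comment> \<open>W_{-k} = xyx...x, length 2k+1\<close>
  "Wneg k = alt X (2 * k + 1)"
definition Wpos :: "nat \<Rightarrow> letter list" where   \<comment> \<open>W_{k+1} = yxy...y, length 2k+1\<close>
  "Wpos k = alt Y (2 * k + 1)"
definition G :: "nat \<Rightarrow> letter list" where      \<comment> \<open>G_k = yx...yx, length 2k\<close>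
  "G k = alt Y (2 * k)"
definition Gt :: "nat \<Rightarrow> letter list" where     \<comment> \<open>tilde G_k = xy...xy, length 2k\<close>
  "Gt k = alt X (2 * k)"

definition qint :: "'a::field \<Rightarrow> int \<Rightarrow> 'a" where
  "qint q m = (q powi m - q powi (-m)) / (q - inverse q)"

end

theory Submission
  imports Defs
begin

(* Reading off the first letter c of a word, the defining recursion expresses the coefficient
   of u * v on c w through the q-shuffles obtained by deleting an initial c from u or from v.
   For the q-power-weighted sums of q-shuffles of two complementary alternating words whose
   first factors have lengths of one parity, reading off two letters therefore gives back sums
   of the same two kinds, with n lowered by one.  The right-hand sides satisfy the same
   two-letter recursions, because (xy + yx) and the two-letter factor T only see the first two
   letters of a word, so both sides agree by induction on n, with [2]_q = q + q^-1. *)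

section \<open>Letters and words\<close>

lemma other_other [simp]: "other (other a) = a"
  by (cases a) simp_all

lemma other_eq_iff [simp]: "other a = other b \<longleftrightarrow> a = b"
  by (cases a; cases b) simp_all

lemma other_neq [simp]: "other a \<noteq> a" "a \<noteq> other a"
  by (cases a; simp)+

lemma neq_other_iff: "b \<noteq> a \<longleftrightarrow> b = other a"
  by (cases a; cases b) simp_all

lemma pair_self [simp]: "pair a a = 2"
  and pair_other [simp]: "pair a (other a) = -2" "pair (other a) a = -2"
  by (simp_all add: pair_def)

lemma vec_eq_two_letters:
  assumes "f [] = g []" "\<And>c. f [c] = g [c]" "\<And>c w. f (c # c # w) = g (c # c # w)"
    and "\<And>w. f (a # other a # w) = g (a # other a # w)"
    and "\<And>w. f (other a # a # w) = g (other a # a # w)"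
  shows "f = g"
proof
  fix w
  show "f w = g w"
  proof (induction w rule: induct_list012)
    case (3 c1 c2 w')
    show ?case
      using assms(3-5) by (cases "c1 = c2"; cases "c1 = a") (auto simp: neq_other_iff)
  qed (use assms(1,2) in auto)
qed

lemma alt_eq_Nil_iff [simp]: "alt a m = [] \<longleftrightarrow> m = 0"
  by (cases m) simp_all

lemma hd_alt: "0 < m \<Longrightarrow> hd (alt a m) = a"
  and tl_alt: "tl (alt a m) = alt (other a) (m - 1)"
  by (cases m; simp)+

lemma sum_pair_alt: "(\<Sum>d\<leftarrow>alt a m. pair d b) = (if even m then 0 else pair a b)"
proof (induction m arbitrary: a)
  case (Suc m)
  have "pair a b + pair (other a) b = 0"
    by (cases a; cases b) (simp_all add: pair_def)
  with Suc show ?case by auto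
qed simp

lemma two_mult_Suc: "2 * Suc k = Suc (Suc (2 * k))"
  by simp

lemma sum_atMost_double_even:
  fixes n :: nat
  shows "(\<Sum>i\<le>2 * n. if even i then g i else 0) = (\<Sum>k\<le>n. g (2 * k) :: 'a::comm_monoid_add)"
  by (induction n) (simp_all add: two_mult_Suc)

lemma sum_atMost_double_odd:
  fixes n :: nat
  shows "(\<Sum>i\<le>2 * n. if odd i then g i else 0) = (\<Sum>k<n. g (2 * k + 1) :: 'a::comm_monoid_add)"
  by (induction n) (simp_all add: two_mult_Suc add.commute)

section \<open>Coefficient vectors and concatenation\<close>

lemma vsmult_apply [simp]: "vsmult c f w = c * f w"
  by (simp add: vsmult_def)

lemma vsmult_vsmult [simp]: "vsmult c (vsmult d f) = vsmult (c * d) f"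
  by (simp add: vsmult_def mult.assoc)

lemma vsmult_eq_self: "c = 1 \<Longrightarrow> vsmult c f = f"
  by (simp add: vsmult_def)

lemma wd_Cons: "wd (a # u) = prep a (wd u)"
  by (rule ext) (auto simp: wd_def prep_def split: list.split)

lemma wd_Nil_apply: "wd [] w = (if w = [] then 1 else 0)"
  by (simp add: wd_def)

lemma wd_Nil_Nil [simp]: "wd [] [] = 1"
  and wd_Nil_Cons [simp]: "wd [] (c # w) = 0"
  and wd_Cons_Nil [simp]: "wd (a # u) [] = 0"
  and wd_Cons_Cons [simp]: "wd (a # u) (c # w) = (if c = a then wd u w else 0)"
  by (simp_all add: wd_def)

lemma prep_Cons [simp]: "prep a f (c # w) = (if c = a then f w else 0)"
  and prep_Nil [simp]: "prep a f [] = 0"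
  by (simp_all add: prep_def)

lemma cat_prep: "cat (prep a f) g = prep a (cat f g)"
proof
  fix w :: "letter list"
  show "cat (prep a f) g w = prep a (cat f g) w"
    by (cases w) (simp_all add: cat_def sum.atMost_Suc_shift del: sum.atMost_Suc)
qed

lemma cat_wd_Nil: "cat (wd []) g = g"
proof
  fix w :: "letter list"
  show "cat (wd []) g w = g w"
    by (cases w) (simp_all add: cat_def wd_def sum.atMost_Suc_shift del: sum.atMost_Suc)
qed

lemma cat_vadd: "cat (vadd f g) h = vadd (cat f h) (cat g h)"
  by (rule ext) (simp add: cat_def vadd_def distrib_right sum.distrib)

lemma cat_vsmult: "cat (vsmult c f) h = vsmult c (cat f h)"
  by (rule ext) (simp add: cat_def vsmult_def sum_distrib_left mult.assoc)

definition dimer :: "letter \<Rightarrow> 'a::field \<Rightarrow> 'a \<Rightarrow> 'a vec" where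
  "dimer a \<alpha> \<beta> = vadd (vsmult \<alpha> (wd [a, other a])) (vsmult \<beta> (wd [other a, a]))"

lemma cat_dimer: "cat (dimer a \<alpha> \<beta>) g =
    vadd (vsmult \<alpha> (prep a (prep (other a) g))) (vsmult \<beta> (prep (other a) (prep a g)))"
  by (simp add: dimer_def cat_vadd cat_vsmult wd_Cons cat_prep cat_wd_Nil)

lemma cat_dimer_Nil [simp]: "cat (dimer a \<alpha> \<beta>) g [] = 0"
  and cat_dimer_single [simp]: "cat (dimer a \<alpha> \<beta>) g [c] = 0"
  and cat_dimer_Cons2: "cat (dimer a \<alpha> \<beta>) g (c1 # c2 # w) =
    (if c2 = c1 then 0 else if c1 = a then \<alpha> * g w else \<beta> * g w)"
  by (auto simp: cat_dimer vadd_def vsmult_def neq_other_iff)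

lemma cat_dimer_assoc: "cat (cat (dimer a \<alpha> \<beta>) f) g = cat (dimer a \<alpha> \<beta>) (cat f g)"
  by (simp add: cat_dimer cat_vadd cat_vsmult cat_prep)

lemma dimer_eq_cat: "dimer a \<alpha> \<beta> = cat (dimer a \<alpha> \<beta>) (wd [])"
  by (simp add: dimer_def cat_vadd cat_vsmult wd_Cons cat_prep cat_wd_Nil)

lemma vsum_cong: "(\<And>k. k \<le> N \<Longrightarrow> f k = g k) \<Longrightarrow> vsum N f = vsum N g"
  by (rule ext) (simp add: vsum_def)

lemma vsum_reverse: "vsum N (\<lambda>k. f (N - k)) = vsum N f"
  unfolding vsum_def using sum.nat_diff_reindex[of "\<lambda>k. f k w" "Suc N" for w]
  by (simp add: lessThan_Suc_atMost)

definition xy_plus_yx :: "'a::field vec" where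
  "xy_plus_yx = vadd (wd [X, Y]) (wd [Y, X])"

lemma xy_plus_yx_dimer: "xy_plus_yx = dimer X 1 1"
  by (rule ext) (simp add: xy_plus_yx_def dimer_def vadd_def vsmult_def)

lemma cat_xy_plus_yx_Nil [simp]: "cat xy_plus_yx f [] = 0"
  and cat_xy_plus_yx_single [simp]: "cat xy_plus_yx f [c] = 0"
  and cat_xy_plus_yx_Cons2: "cat xy_plus_yx f (c1 # c2 # w) = (if c2 = c1 then 0 else f w)"
  by (simp_all add: xy_plus_yx_dimer cat_dimer_Cons2)

lemma cat_cat_xy_plus_yx: "cat (cat xy_plus_yx f) g = cat xy_plus_yx (cat f g)"
  by (simp add: xy_plus_yx_dimer cat_dimer_assoc)

lemma dimer_Nil [simp]: "dimer a \<alpha> \<beta> [] = 0"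
  and dimer_single [simp]: "dimer a \<alpha> \<beta> [c] = 0"
  and dimer_Cons2: "dimer a \<alpha> \<beta> (c1 # c2 # w) =
    (if c2 = c1 \<or> w \<noteq> [] then 0 else if c1 = a then \<alpha> else \<beta>)"
  by (subst dimer_eq_cat; simp add: cat_dimer_Cons2 wd_def)+

lemma cat_dimer_other:
  "cat (dimer (other a) \<alpha> \<beta>) f w = (\<alpha> + \<beta>) * cat xy_plus_yx f w - cat (dimer a \<alpha> \<beta>) f w"
  by (cases a) (simp_all add: xy_plus_yx_dimer cat_dimer vadd_def algebra_simps)

lemma dimer_X: "dimer X \<alpha> \<beta> = vadd (vsmult \<alpha> (wd [X, Y])) (vsmult \<beta> (wd [Y, X]))"
  and dimer_Y: "dimer Y \<alpha> \<beta> = vadd (vsmult \<beta> (wd [X, Y])) (vsmult \<alpha> (wd [Y, X]))"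
  by (simp_all add: dimer_def vadd_def add.commute)

section \<open>Shuffles of alternating words\<close>

lemma qshuf_Nil_word: "qshuf q u v [] = (if u = [] \<and> v = [] then 1 else 0)"
  by (cases u; cases v) (simp_all add: wd_def vadd_def vsmult_def)

lemma qshuf_right_Nil [simp]: "qshuf q u [] = wd u"
  by (cases u) simp_all

lemma qshuf_Cons_word: "qshuf q u v (c # w) =
    (if u \<noteq> [] \<and> hd u = c then qshuf q (tl u) v w else 0)
  + (if v \<noteq> [] \<and> hd v = c then q powi (\<Sum>d\<leftarrow>u. pair d (hd v)) * qshuf q u (tl v) w else 0)"
  by (cases u; cases v) (simp_all add: wd_Cons vadd_def vsmult_def qshuf_right_Nil)

lemma qshuf_alt_Cons: "qshuf q (alt a m) (alt b l) (c # w) =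
    (if 0 < m \<and> c = a then qshuf q (alt (other a) (m - 1)) (alt b l) w else 0)
  + (if 0 < l \<and> c = b
     then q powi (if odd m then pair a b else 0) * qshuf q (alt a m) (alt (other b) (l - 1)) w
     else 0)"
  by (auto simp: qshuf_Cons_word hd_alt tl_alt sum_pair_alt)

definition shuffle_sum :: "'a::field \<Rightarrow> letter \<Rightarrow> letter \<Rightarrow> (nat \<Rightarrow> 'a) \<Rightarrow> nat \<Rightarrow> 'a vec" where
  "shuffle_sum q a b \<phi> L = vsum L (\<lambda>i. vsmult (\<phi> i) (qshuf q (alt a i) (alt b (L - i))))"

lemma shuffle_sum_0: "shuffle_sum q a b \<phi> 0 w = (if w = [] then \<phi> 0 else 0)"
  by (simp add: shuffle_sum_def vsum_def vsmult_def wd_def)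

lemma shuffle_sum_Nil: "shuffle_sum q a b \<phi> (Suc L) [] = 0"
  by (simp add: shuffle_sum_def vsum_def vsmult_def qshuf_Nil_word)

lemma shuffle_sum_scale: "shuffle_sum q a b (\<lambda>i. c * \<phi> i) L w = c * shuffle_sum q a b \<phi> L w"
  by (simp add: shuffle_sum_def vsum_def vsmult_def sum_distrib_left mult.assoc)

lemma shuffle_sum_Cons: "shuffle_sum q a b \<phi> (Suc L) (c # w) =
    (if c = a then shuffle_sum q (other a) b (\<lambda>i. \<phi> (Suc i)) L w else 0)
  + (if c = b then shuffle_sum q a (other b) (\<lambda>i. q powi (if odd i then pair a b else 0) * \<phi> i) L w
     else 0)"
proof -
  have left: "(\<Sum>i\<le>Suc L. \<phi> i * (if 0 < i \<and> c = a then qshuf q (alt (other a) (i - 1)) (alt b (Suc L - i)) w else 0))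
    = (if c = a then shuffle_sum q (other a) b (\<lambda>i. \<phi> (Suc i)) L w else 0)"
    by (simp add: shuffle_sum_def vsum_def vsmult_def sum.atMost_Suc_shift del: sum.atMost_Suc)
  have right: "(\<Sum>i\<le>Suc L. \<phi> i * (if 0 < Suc L - i \<and> c = b then q powi (if odd i then pair a b else 0)
         * qshuf q (alt a i) (alt (other b) (Suc L - i - 1)) w else 0))
    = (if c = b then shuffle_sum q a (other b) (\<lambda>i. q powi (if odd i then pair a b else 0) * \<phi> i) L w
     else 0)"
    by (auto simp: shuffle_sum_def vsum_def vsmult_def mult_ac intro!: sum.cong)
  show ?thesis
    unfolding left[symmetric] right[symmetric]
    by (simp add: shuffle_sum_def vsum_def vsmult_def qshuf_alt_Cons distrib_left sum.distrib)
qed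

text \<open>With \<open>ev\<close> the first factors have even length, as in the sums of
  \<open>qshuf q (G k) (Gt (n - k))\<close>; without it they have odd length, as in the sums of
  \<open>qshuf q (Wneg k) (Wpos (n - k - 1))\<close>.\<close>

definition parity_sum :: "'a::field \<Rightarrow> letter \<Rightarrow> letter \<Rightarrow> int \<Rightarrow> bool \<Rightarrow> nat \<Rightarrow> 'a vec" where
  "parity_sum q a b \<sigma> ev =
     shuffle_sum q a b (\<lambda>i. if even i = ev then q powi (\<sigma> * int i) else 0)"

lemma parity_sum_0: "parity_sum q a b \<sigma> ev 0 w = (if ev \<and> w = [] then 1 else 0)"
  by (simp add: parity_sum_def shuffle_sum_0)

lemma parity_sum_Nil: "parity_sum q a b \<sigma> ev (Suc L) [] = 0"
  by (simp add: parity_sum_def shuffle_sum_Nil)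

lemma parity_sum_Cons:
  assumes "q \<noteq> 0"
  shows "parity_sum q a b \<sigma> ev (Suc L) (c # w) =
    (if c = a then q powi \<sigma> * parity_sum q (other a) b \<sigma> (\<not> ev) L w else 0)
  + (if c = b then q powi (if ev then 0 else pair a b) * parity_sum q a (other b) \<sigma> ev L w else 0)"
proof -
  have shift: "(\<lambda>i. if even (Suc i) = ev then q powi (\<sigma> * int (Suc i)) else 0)
      = (\<lambda>i. q powi \<sigma> * (if even i = (\<not> ev) then q powi (\<sigma> * int i) else 0))"
    using assms by (auto simp: algebra_simps power_int_add)
  have twist: "(\<lambda>i. q powi (if odd i then pair a b else 0) * (if even i = ev then q powi (\<sigma> * int i) else 0))
      = (\<lambda>i. q powi (if ev then 0 else pair a b) * (if even i = ev then q powi (\<sigma> * int i) else 0))"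
    by auto
  show ?thesis
    unfolding parity_sum_def shuffle_sum_Cons shift twist shuffle_sum_scale ..
qed

lemma parity_sum_single: "q \<noteq> 0 \<Longrightarrow> parity_sum q a b \<sigma> ev (Suc (Suc L)) [c] = 0"
  by (simp add: parity_sum_Cons parity_sum_Nil)

lemma parity_sum_same:
  "q \<noteq> 0 \<Longrightarrow> b = other a \<Longrightarrow> parity_sum q a b \<sigma> ev (Suc (Suc L)) (c # c # w) = 0"
  by (cases "c = a") (auto simp: parity_sum_Cons neq_other_iff)

lemma parity_sum_ab:
  assumes q0: "q \<noteq> 0" and b: "b = other a"
  shows "parity_sum q a b \<sigma> ev (Suc (Suc L)) (a # b # w) =
     q powi (2 * \<sigma>) * parity_sum q a b \<sigma> ev L w
   + q powi (\<sigma> + (if ev then 2 else 0)) * parity_sum q b a \<sigma> (\<not> ev) L w"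
proof -
  have "q powi (2 * \<sigma>) = q powi \<sigma> * q powi \<sigma>"
    "q powi (\<sigma> + (if ev then 2 else 0)) = q powi \<sigma> * q powi (if ev then 2 else 0)"
    by (simp_all only: mult_2 power_int_add[OF disjI1, OF q0])
  then show ?thesis
    using q0 b by (simp add: parity_sum_Cons distrib_left mult.assoc)
qed

lemma parity_sum_ba:
  assumes q0: "q \<noteq> 0" and b: "b = other a"
  shows "parity_sum q a b \<sigma> ev (Suc (Suc L)) (b # a # w) =
     q powi (\<sigma> - (if ev then 0 else 2)) * parity_sum q b a \<sigma> (\<not> ev) L w
   + parity_sum q a b \<sigma> ev L w"
proof (cases ev)
  case False
  have "q powi (\<sigma> - 2) = q powi (- 2) * q powi \<sigma>" "q powi (- 2) * q powi 2 = 1"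
    using power_int_add[OF disjI1, OF q0, of "-2" \<sigma>] power_int_add[OF disjI1, OF q0, of "-2" 2]
    by (simp_all add: add.commute)
  with False show ?thesis
    using q0 b by (simp add: parity_sum_Cons distrib_left flip: mult.assoc)
qed (use q0 b in \<open>simp add: parity_sum_Cons\<close>)

section \<open>Closed forms of the parity sums\<close>

lemma parity_sum_minus_closed_form:
  fixes q :: "'a::field" and a :: letter
  assumes q0: "q \<noteq> 0"
  defines "R m \<equiv> vsmult ((q + inverse q) ^ m) (cat (cpow xy_plus_yx m) (dimer a (inverse q) q))"
  shows "parity_sum q a (other a) (-1) True (2 * Suc m) = vsmult (inverse q ^ Suc m) (R m)
    \<and> parity_sum q (other a) a (-1) False (2 * Suc m) = vsmult (inverse q ^ Suc (Suc m)) (R m)"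
proof (induction m)
  case 0
  show ?case
    by (intro conjI vec_eq_two_letters[where a = a])
      (simp_all add: R_def q0 cat_wd_Nil parity_sum_Nil parity_sum_single parity_sum_same
        parity_sum_ab parity_sum_ba parity_sum_0 dimer_Cons2 wd_Nil_apply power_int_minus
        power2_eq_square power3_eq_cube field_simps)
next
  case (Suc m)
  define L where "L = 2 * Suc m"
  have L: "2 * Suc (Suc m) = Suc (Suc L)"
    by (simp add: L_def)
  have IH: "parity_sum q a (other a) (-1) True L w = inverse q ^ Suc m * R m w"
    "parity_sum q (other a) a (-1) False L w = inverse q ^ Suc (Suc m) * R m w" for w
    using Suc.IH by (simp_all add: L_def)
  have R_Suc: "R (Suc m) [] = 0" "R (Suc m) [c] = 0"
    "R (Suc m) (c1 # c2 # w) = (if c2 = c1 then 0 else (q + inverse q) * R m w)" for c c1 c2 w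
    by (simp_all add: R_def cat_cat_xy_plus_yx cat_xy_plus_yx_Cons2)
  show ?case
    unfolding L
    by (intro conjI vec_eq_two_letters[where a = a])
      (simp_all add: q0 R_Suc IH parity_sum_Nil parity_sum_single parity_sum_same
        parity_sum_ab parity_sum_ba power_int_minus power2_eq_square power3_eq_cube field_simps)
qed

lemma parity_sum_plus_closed_form:
  fixes q :: "'a::field"
  assumes q0: "q \<noteq> 0"
  defines "R a m \<equiv> vsmult ((q + inverse q) ^ m) (cat (dimer a q (inverse q)) (cpow xy_plus_yx m))"
  shows "parity_sum q a (other a) 1 True (2 * Suc m) = vsmult (q ^ Suc m) (R a m)
    \<and> parity_sum q a (other a) 1 False (2 * Suc m) = vsmult (q ^ m) (R a m)"
proof (induction m arbitrary: a)
  case 0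
  show ?case
    by (intro conjI vec_eq_two_letters[where a = a])
      (simp_all add: R_def q0 parity_sum_Nil parity_sum_single parity_sum_same
        parity_sum_ab parity_sum_ba parity_sum_0 cat_dimer_Cons2 wd_Nil_apply power2_eq_square field_simps)
next
  case (Suc m)
  define L where "L = 2 * Suc m"
  have L: "2 * Suc (Suc m) = Suc (Suc L)"
    by (simp add: L_def)
  have IH: "parity_sum q c (other c) 1 True L w = q ^ Suc m * R c m w"
    "parity_sum q c (other c) 1 False L w = q ^ m * R c m w" for c w
    using Suc.IH by (simp_all add: L_def)
  \<comment> \<open>Reading off two letters couples the sums for \<open>a\<close> and for \<open>other a\<close>; their
    right-hand sides add up to [2]^(m+1) (xy+yx)^(m+1).\<close>
  have R_other: "R (other a) m w = (q + inverse q) ^ Suc m * cpow xy_plus_yx (Suc m) w - R a m w" for w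
    by (simp add: R_def cat_dimer_other algebra_simps)
  have R_Suc: "R a (Suc m) [] = 0" "R a (Suc m) [c] = 0"
    "R a (Suc m) (c1 # c2 # w) = (if c2 = c1 then 0 else if c1 = a then q else inverse q)
       * (q + inverse q) ^ Suc m * cpow xy_plus_yx (Suc m) w" for c c1 c2 w
    by (simp_all add: R_def cat_dimer_Cons2 del: cpow.simps)
  show ?case
    unfolding L
    by (intro conjI vec_eq_two_letters[where a = a])
      (simp_all add: q0 R_Suc IH IH[of "other a", simplified] R_other parity_sum_Nil parity_sum_single parity_sum_same
        parity_sum_ab parity_sum_ba power2_eq_square power3_eq_cube field_simps del: cpow.simps)
qed

lemma vsum_even_eq_parity_sum:
  assumes q0: "q \<noteq> 0" and e: "\<And>k. k \<le> n \<Longrightarrow> e k = c + \<sigma> * (2 * int k)"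
  shows "vsum n (\<lambda>k. vsmult (q powi e k) (qshuf q (alt a (2 * k)) (alt b (2 * (n - k)))))
    = vsmult (q powi c) (parity_sum q a b \<sigma> True (2 * n))"
proof
  fix w
  have "parity_sum q a b \<sigma> True (2 * n) w = (\<Sum>i\<le>2 * n.
      if even i then q powi (\<sigma> * int i) * qshuf q (alt a i) (alt b (2 * n - i)) w else 0)"
    by (auto simp: parity_sum_def shuffle_sum_def vsum_def intro!: sum.cong)
  also have "\<dots> = (\<Sum>k\<le>n. q powi (\<sigma> * (2 * int k)) * qshuf q (alt a (2 * k)) (alt b (2 * (n - k))) w)"
    by (simp add: sum_atMost_double_even right_diff_distrib')
  finally show "vsum n (\<lambda>k. vsmult (q powi e k) (qshuf q (alt a (2 * k)) (alt b (2 * (n - k))))) w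
    = vsmult (q powi c) (parity_sum q a b \<sigma> True (2 * n)) w"
    using e q0 by (simp add: vsum_def sum_distrib_left power_int_add mult.assoc)
qed

lemma vsum_odd_eq_parity_sum:
  assumes q0: "q \<noteq> 0" and n: "1 \<le> n" and e: "\<And>k. k < n \<Longrightarrow> e k = c + \<sigma> * (2 * int k + 1)"
  shows "vsum (n - 1) (\<lambda>k. vsmult (q powi e k) (qshuf q (alt a (2 * k + 1)) (alt b (2 * (n - k - 1) + 1))))
    = vsmult (q powi c) (parity_sum q a b \<sigma> False (2 * n))"
proof
  fix w
  have "parity_sum q a b \<sigma> False (2 * n) w = (\<Sum>i\<le>2 * n.
      if odd i then q powi (\<sigma> * int i) * qshuf q (alt a i) (alt b (2 * n - i)) w else 0)"
    by (auto simp: parity_sum_def shuffle_sum_def vsum_def intro!: sum.cong)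
  also have "\<dots> = (\<Sum>k<n. q powi (\<sigma> * (2 * int k + 1)) * qshuf q (alt a (2 * k + 1)) (alt b (2 * (n - k - 1) + 1)) w)"
    unfolding sum_atMost_double_odd
  proof (intro sum.cong refl)
    fix k assume "k \<in> {..<n}"
    then have "2 * n - (2 * k + 1) = 2 * (n - k - 1) + 1" "int (2 * k + 1) = 2 * int k + 1"
      by auto
    then show "q powi (\<sigma> * int (2 * k + 1)) * qshuf q (alt a (2 * k + 1)) (alt b (2 * n - (2 * k + 1))) w
      = q powi (\<sigma> * (2 * int k + 1)) * qshuf q (alt a (2 * k + 1)) (alt b (2 * (n - k - 1) + 1)) w"
      by (simp only:)
  qed
  also have "\<dots> = (\<Sum>k\<le>n - 1. q powi (\<sigma> * (2 * int k + 1)) * qshuf q (alt a (2 * k + 1)) (alt b (2 * (n - k - 1) + 1)) w)"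
    using n by (simp add: lessThan_Suc_atMost[symmetric] del: alt.simps)
  finally show "vsum (n - 1) (\<lambda>k. vsmult (q powi e k) (qshuf q (alt a (2 * k + 1)) (alt b (2 * (n - k - 1) + 1)))) w
    = vsmult (q powi c) (parity_sum q a b \<sigma> False (2 * n)) w"
    using e q0 n
    by (auto simp: vsum_def sum_distrib_left power_int_add mult.assoc simp del: alt.simps intro!: sum.cong)
qed

lemma vsum_odd_rev_eq_parity_sum:
  assumes q0: "q \<noteq> 0" and n: "1 \<le> n"
    and e: "\<And>k. k < n \<Longrightarrow> e k = c + \<sigma> * (2 * int (n - k - 1) + 1)"
  shows "vsum (n - 1) (\<lambda>k. vsmult (q powi e k) (qshuf q (alt a (2 * (n - k - 1) + 1)) (alt b (2 * k + 1))))
    = vsmult (q powi c) (parity_sum q a b \<sigma> False (2 * n))"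
proof -
  have "vsum (n - 1) (\<lambda>k. vsmult (q powi e k) (qshuf q (alt a (2 * (n - k - 1) + 1)) (alt b (2 * k + 1))))
    = vsum (n - 1) (\<lambda>k. vsmult (q powi e (n - 1 - k)) (qshuf q (alt a (2 * k + 1)) (alt b (2 * (n - k - 1) + 1))))"
  proof (subst vsum_reverse[symmetric], rule vsum_cong)
    fix k assume "k \<le> n - 1"
    then have "n - (n - 1 - k) - 1 = k" "n - 1 - k = n - k - 1"
      using n by arith+
    then show "vsmult (q powi e (n - 1 - k)) (qshuf q (alt a (2 * (n - (n - 1 - k) - 1) + 1)) (alt b (2 * (n - 1 - k) + 1)))
      = vsmult (q powi e (n - 1 - k)) (qshuf q (alt a (2 * k + 1)) (alt b (2 * (n - k - 1) + 1)))"
      by (simp only:)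
  qed
  also have "\<dots> = vsmult (q powi c) (parity_sum q a b \<sigma> False (2 * n))"
    by (rule vsum_odd_eq_parity_sum[OF q0 n]) (use e in \<open>auto simp: of_nat_diff\<close>)
  finally show ?thesis .
qed

lemma alternating_sums_minus:
  fixes q :: "'a::field" and a :: letter
  assumes q0: "q \<noteq> 0" and n: "1 \<le> n"
  defines "R \<equiv> vsmult ((q + inverse q) ^ (n - 1)) (cat (cpow xy_plus_yx (n - 1)) (dimer a (inverse q) q))"
  shows "vsum n (\<lambda>k. vsmult (q powi (int n - 2 * int k))
      (qshuf q (alt a (2 * k)) (alt (other a) (2 * (n - k))))) = R"
    and "vsmult q (vsum (n - 1) (\<lambda>k. vsmult (q powi (int n - 1 - 2 * int k))
      (qshuf q (alt (other a) (2 * k + 1)) (alt a (2 * (n - k - 1) + 1))))) = R"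
    and "vsmult q (vsum (n - 1) (\<lambda>k. vsmult (q powi (2 * int k + 1 - int n))
      (qshuf q (alt (other a) (2 * (n - k - 1) + 1)) (alt a (2 * k + 1))))) = R"
proof -
  obtain m where m: "n = Suc m"
    using n by (cases n) auto
  have closed: "parity_sum q a (other a) (-1) True (2 * n) = vsmult (inverse q ^ n) R"
    "parity_sum q (other a) a (-1) False (2 * n) = vsmult (inverse q ^ Suc n) R"
    using parity_sum_minus_closed_form[OF q0, of a m] by (simp_all add: m R_def)
  show "vsum n (\<lambda>k. vsmult (q powi (int n - 2 * int k))
      (qshuf q (alt a (2 * k)) (alt (other a) (2 * (n - k))))) = R"
    by (subst vsum_even_eq_parity_sum[OF q0, where c = "int n" and \<sigma> = "-1"])
      (simp_all add: closed, intro vsmult_eq_self, simp add: q0 m field_simps)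
  show "vsmult q (vsum (n - 1) (\<lambda>k. vsmult (q powi (int n - 1 - 2 * int k))
      (qshuf q (alt (other a) (2 * k + 1)) (alt a (2 * (n - k - 1) + 1))))) = R"
    by (subst vsum_odd_eq_parity_sum[OF q0 n, where c = "int n" and \<sigma> = "-1"])
      (simp_all add: closed, intro vsmult_eq_self, simp add: q0 m field_simps)
  show "vsmult q (vsum (n - 1) (\<lambda>k. vsmult (q powi (2 * int k + 1 - int n))
      (qshuf q (alt (other a) (2 * (n - k - 1) + 1)) (alt a (2 * k + 1))))) = R"
    by (subst vsum_odd_rev_eq_parity_sum[OF q0 n, where c = "int n" and \<sigma> = "-1"])
      (simp_all add: closed of_nat_diff, intro vsmult_eq_self, simp add: q0 m field_simps)
qed

lemma alternating_sums_plus: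
  fixes q :: "'a::field" and a :: letter
  assumes q0: "q \<noteq> 0" and n: "1 \<le> n"
  defines "R \<equiv> vsmult ((q + inverse q) ^ (n - 1)) (cat (dimer a q (inverse q)) (cpow xy_plus_yx (n - 1)))"
  shows "vsum n (\<lambda>k. vsmult (q powi (2 * int k - int n))
      (qshuf q (alt a (2 * k)) (alt (other a) (2 * (n - k))))) = R"
    and "vsmult q (vsum (n - 1) (\<lambda>k. vsmult (q powi (2 * int k + 1 - int n))
      (qshuf q (alt a (2 * k + 1)) (alt (other a) (2 * (n - k - 1) + 1))))) = R"
    and "vsmult q (vsum (n - 1) (\<lambda>k. vsmult (q powi (int n - 1 - 2 * int k))
      (qshuf q (alt a (2 * (n - k - 1) + 1)) (alt (other a) (2 * k + 1))))) = R"
proof -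
  obtain m where m: "n = Suc m"
    using n by (cases n) auto
  have closed: "parity_sum q a (other a) 1 True (2 * n) = vsmult (q ^ n) R"
    "parity_sum q a (other a) 1 False (2 * n) = vsmult (q ^ m) R"
    using parity_sum_plus_closed_form[OF q0, of a m] by (simp_all add: m R_def)
  have scalars: "q powi (- int n) = inverse (q ^ n)" "q ^ n = q * q ^ m"
    by (simp_all only: power_int_minus power_int_of_nat) (simp add: m)
  show "vsum n (\<lambda>k. vsmult (q powi (2 * int k - int n))
      (qshuf q (alt a (2 * k)) (alt (other a) (2 * (n - k))))) = R"
    by (subst vsum_even_eq_parity_sum[OF q0, where c = "- int n" and \<sigma> = 1])
      (simp_all add: closed, intro vsmult_eq_self, simp add: q0 scalars field_simps)
  show "vsmult q (vsum (n - 1) (\<lambda>k. vsmult (q powi (2 * int k + 1 - int n))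
      (qshuf q (alt a (2 * k + 1)) (alt (other a) (2 * (n - k - 1) + 1))))) = R"
    by (subst vsum_odd_eq_parity_sum[OF q0 n, where c = "- int n" and \<sigma> = 1])
      (simp_all add: closed, intro vsmult_eq_self, simp add: q0 scalars field_simps)
  show "vsmult q (vsum (n - 1) (\<lambda>k. vsmult (q powi (int n - 1 - 2 * int k))
      (qshuf q (alt a (2 * (n - k - 1) + 1)) (alt (other a) (2 * k + 1))))) = R"
    by (subst vsum_odd_rev_eq_parity_sum[OF q0 n, where c = "- int n" and \<sigma> = 1])
      (simp_all add: closed of_nat_diff, intro vsmult_eq_self, simp add: q0 scalars field_simps)
qed

lemma qint_two:
  assumes "q \<noteq> 0" and "q ^ 2 \<noteq> 1"
  shows "qint q 2 = q + inverse q"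
proof -
  have "q - inverse q \<noteq> 0"
    using assms by (auto simp: power2_eq_square field_simps)
  moreover have "q powi 2 - q powi (-2) = (q - inverse q) * (q + inverse q)"
    using assms(1) by (simp add: power_int_minus power2_eq_square field_simps)
  ultimately show ?thesis
    by (simp add: qint_def)
qed

theorem proposition12p6:
  fixes q :: "'a::field" and n :: nat
  assumes hq0: "q \<noteq> 0"
    and hroot: "\<forall>m::nat. m > 0 \<longrightarrow> q ^ m \<noteq> 1"
    and hn: "n \<ge> 1"
  defines "S \<equiv> vadd (wd [X, Y]) (wd [Y, X])"
  shows
   "vsum n (\<lambda>k. vsmult (q powi (int n - 2 * int k)) (qshuf q (G k) (Gt (n - k))))
      = vsmult q (vsum (n - 1) (\<lambda>k. vsmult (q powi (int n - 1 - 2 * int k))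
                                 (qshuf q (Wneg k) (Wpos (n - k - 1)))))
    \<and> vsmult q (vsum (n - 1) (\<lambda>k. vsmult (q powi (int n - 1 - 2 * int k))
                                 (qshuf q (Wneg k) (Wpos (n - k - 1)))))
      = vsmult (qint q 2 ^ (n - 1))
          (cat (cpow S (n - 1)) (vadd (vsmult q (wd [X, Y])) (vsmult (inverse q) (wd [Y, X]))))
    \<and> vsum n (\<lambda>k. vsmult (q powi (2 * int k - int n)) (qshuf q (G k) (Gt (n - k))))
      = vsmult q (vsum (n - 1) (\<lambda>k. vsmult (q powi (int n - 1 - 2 * int k))
                                 (qshuf q (Wpos (n - k - 1)) (Wneg k))))
    \<and> vsmult q (vsum (n - 1) (\<lambda>k. vsmult (q powi (int n - 1 - 2 * int k))
                                 (qshuf q (Wpos (n - k - 1)) (Wneg k))))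
      = vsmult (qint q 2 ^ (n - 1))
          (cat (vadd (vsmult (inverse q) (wd [X, Y])) (vsmult q (wd [Y, X]))) (cpow S (n - 1)))
    \<and> vsum n (\<lambda>k. vsmult (q powi (int n - 2 * int k)) (qshuf q (Gt k) (G (n - k))))
      = vsmult q (vsum (n - 1) (\<lambda>k. vsmult (q powi (2 * int k + 1 - int n))
                                 (qshuf q (Wpos (n - k - 1)) (Wneg k))))
    \<and> vsmult q (vsum (n - 1) (\<lambda>k. vsmult (q powi (2 * int k + 1 - int n))
                                 (qshuf q (Wpos (n - k - 1)) (Wneg k))))
      = vsmult (qint q 2 ^ (n - 1))
          (cat (cpow S (n - 1)) (vadd (vsmult (inverse q) (wd [X, Y])) (vsmult q (wd [Y, X]))))
    \<and> vsum n (\<lambda>k. vsmult (q powi (2 * int k - int n)) (qshuf q (Gt k) (G (n - k))))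
      = vsmult q (vsum (n - 1) (\<lambda>k. vsmult (q powi (2 * int k + 1 - int n))
                                 (qshuf q (Wneg k) (Wpos (n - k - 1)))))
    \<and> vsmult q (vsum (n - 1) (\<lambda>k. vsmult (q powi (2 * int k + 1 - int n))
                                 (qshuf q (Wneg k) (Wpos (n - k - 1)))))
      = vsmult (qint q 2 ^ (n - 1))
          (cat (vadd (vsmult q (wd [X, Y])) (vsmult (inverse q) (wd [Y, X]))) (cpow S (n - 1)))"
proof -
  \<comment> \<open>\<open>hroot\<close> is needed only for \<open>q\<^sup>2 \<noteq> 1\<close>; otherwise \<open>qint q 2\<close> is the junk value \<open>0 / 0 = 0\<close>.\<close>
  have "qint q 2 = q + inverse q"
    using hq0 hroot[rule_format, of 2] by (intro qint_two) auto
  then show ?thesis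
    using alternating_sums_minus[OF hq0 hn, of Y] alternating_sums_minus[OF hq0 hn, of X]
      alternating_sums_plus[OF hq0 hn, of Y] alternating_sums_plus[OF hq0 hn, of X]
    unfolding S_def G_def Gt_def Wneg_def Wpos_def xy_plus_yx_def
    by (simp add: dimer_X dimer_Y)
qed

end
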